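(* Let $\Bbbk$ be a field of characteristic zero, let $V$ be a finite-dimensional $\Bbbk$-vector space, let $m\ge 2$, and for each $\ell=2,\dots,m$ let $\Psi_\ell:V^{\ell}\to V$ be a symmetric $\Bbbk$-multilinear map. Consider the polynomial map $F:V\to V$, $F(x)=x-\sum_{\ell=2}^m\Psi_\ell(x,\dots,x)$, and the algebra $A=(V,\{\Psi_\ell\}_{\ell=2}^m)$. Then the Jacobian (determinant of the Jacobian matrix) of $F$ is identically $1$ if and only if $A$ is of Engel type $s$ for some $s$.
   Context: For $x\in A$ and $2\le\ell\le m$, let $\mathrm{Ad}_{\ell-1}(x):A\to A$ be the linear map $y\mapsto\Psi_\ell(y,x,\dots,x)$. For $s\ge1$ let $E_s(x)$ be the linear operator $\sum \ell_1\ell_2\cdots\ell_q\,\mathrm{Ad}_{\ell_1-1}(x)\circ\cdots\circ\mathrm{Ad}_{\ell_q-1}(x)$, the sum over all $q\ge1$ and all sequences $(\ell_1,\dots,\ell_q)$ with $2\le\ell_i\le m$ and $\sum_i(\ell_i-1)=s$; this is the homogeneous component of degree $s$ in $x$ of the formal series $\sum_{k\ge0}\big(\sum_{\ell=2}^m \ell\,\mathrm{Ad}_{\ell-1}(x)\big)^k$ (the formal inverse of the differential $E-\sum_\ell \ell\,\mathrm{Ad}_{\ell-1}(x)$ of $F$). The algebra $A$ is said to be of Engel type $s$ if $E_{s'}(x)=0$ for all $x\in A$ and all $s'\ge s$. (In the cubic case $F(x)=x-\Psi_3(x,x,x)$ this amounts to nilpotence of the operators $y\mapsto\Psi_3(x,x,y)$.)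 *)

theory Defs
  imports "HOL-Analysis.Analysis" "HOL-Computational_Algebra.Polynomial"
begin

text \<open>An l-linear map V^l \<rightarrow> V is modelled as a function Psi l taking an argument
  family v :: nat \<Rightarrow> 'k^'n, of which only the entries v 0, ..., v (l-1) matter.\<close>

definition symmetric_multilinear :: "nat \<Rightarrow> ((nat \<Rightarrow> 'k::field ^'n) \<Rightarrow> 'k^'n) \<Rightarrow> bool" where
  "symmetric_multilinear l P \<longleftrightarrow>
     (\<forall>v w. (\<forall>i<l. v i = w i) \<longrightarrow> P v = P w) \<and>
     (\<forall>i<l. \<forall>v a b. P (v(i := a + b)) = P (v(i := a)) + P (v(i := b))) \<and>
     (\<forall>i<l. \<forall>v a c. P (v(i := c *s a)) = c *s P (v(i := a))) \<and>
     (\<forall>p v. p permutes {..<l} \<longrightarrow> P (v \<circ> p) = P v)"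

definition polyF :: "nat \<Rightarrow> (nat \<Rightarrow> (nat \<Rightarrow> 'k::field ^'n) \<Rightarrow> 'k^'n) \<Rightarrow> 'k^'n \<Rightarrow> 'k^'n" where
  "polyF m Psi x = x - (\<Sum>l\<in>{2..m}. Psi l (\<lambda>_. x))"

text \<open>Formal partial derivative: the (i,j) entry of the Jacobian matrix of a polynomial
  map G at x is the coefficient of t in the polynomial t \<mapsto> G(x + t e_j)_i.\<close>
definition jacobian_matrix :: "('k::field ^'n \<Rightarrow> 'k^'n) \<Rightarrow> 'k^'n \<Rightarrow> 'k^'n^'n" where
  "jacobian_matrix G x = (\<chi> i j. coeff (THE p. \<forall>t. poly p t = G (x + t *s axis j 1) $ i) 1)"

definition Ad :: "(nat \<Rightarrow> (nat \<Rightarrow> 'k::field ^'n) \<Rightarrow> 'k^'n) \<Rightarrow> nat \<Rightarrow> 'k^'n \<Rightarrow> 'k^'n \<Rightarrow> 'k^'n" where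
  "Ad Psi l x y = Psi l (\<lambda>i. if i = 0 then y else x)"

definition engel_seqs :: "nat \<Rightarrow> nat \<Rightarrow> nat list set" where
  "engel_seqs m s = {ls. ls \<noteq> [] \<and> set ls \<subseteq> {2..m} \<and> sum_list (map (\<lambda>l. l - 1) ls) = s}"

definition engelE :: "nat \<Rightarrow> (nat \<Rightarrow> (nat \<Rightarrow> 'k::field ^'n) \<Rightarrow> 'k^'n) \<Rightarrow> nat \<Rightarrow> 'k^'n \<Rightarrow> 'k^'n \<Rightarrow> 'k^'n" where
  "engelE m Psi s x y =
     (\<Sum>ls\<in>engel_seqs m s. of_nat (prod_list ls) *s foldr (\<lambda>l f. Ad Psi l x \<circ> f) ls id y)"

definition engel_type :: "nat \<Rightarrow> (nat \<Rightarrow> (nat \<Rightarrow> 'k::field ^'n) \<Rightarrow> 'k^'n) \<Rightarrow> nat \<Rightarrow> bool" where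
  "engel_type m Psi s \<longleftrightarrow> (\<forall>x s'. s' \<ge> s \<longrightarrow> (\<forall>y. engelE m Psi s' x y = 0))"

end

theory Submission
  imports Defs
begin

text \<open>Along a ray \<open>t \<mapsto> t x\<close> the Jacobian matrix of \<open>F\<close> is the polynomial matrix
  \<open>A(t) = E - \<Sum>\<^sub>a t\<^sup>a B\<^sub>a\<close> with \<open>B\<^sub>a = (a + 1) Ad\<^sub>a(x)\<close>, by homogeneity of \<open>\<Psi>\<^sub>a\<^sub>+\<^sub>1\<close>.
  The coefficients \<open>Q\<^sub>s\<close> of its formal inverse satisfy \<open>Q\<^sub>0 = E\<close>,
  \<open>Q\<^sub>s = \<Sum>\<^sub>a B\<^sub>a Q\<^sub>s\<^sub>-\<^sub>a\<close>, and unfolding this recursion over compositions of \<open>s\<close> shows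
  \<open>Q\<^sub>s = E\<^sub>s(x)\<close>. If \<open>det A(t) = 1\<close> for all \<open>t\<close>, the adjugate of \<open>A\<close> is a polynomial
  inverse of degree at most \<open>n (m - 1)\<close>, so \<open>E\<^sub>s(x) = 0\<close> for \<open>s > n (m - 1)\<close>, uniformly in \<open>x\<close>.
  Conversely, if the \<open>E\<^sub>s(x)\<close> vanish for large \<open>s\<close>, the truncated series is a polynomial
  inverse of \<open>A\<close>; then \<open>det A\<close> is a unit of \<open>\<bbbk>[t]\<close> with constant term \<open>det E = 1\<close>, and
  evaluating at \<open>t = 1\<close> gives the Jacobian determinant at \<open>x\<close>.\<close>

section \<open>Symmetric multilinear maps\<close>

lemma symmetric_multilinear_cong:
  "symmetric_multilinear l P \<Longrightarrow> (\<And>i. i < l \<Longrightarrow> v i = w i) \<Longrightarrow> P v = P w"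
  unfolding symmetric_multilinear_def by blast

lemma symmetric_multilinear_add:
  "symmetric_multilinear l P \<Longrightarrow> i < l \<Longrightarrow> P (v(i := a + b)) = P (v(i := a)) + P (v(i := b))"
  unfolding symmetric_multilinear_def by blast

lemma symmetric_multilinear_scale:
  "symmetric_multilinear l P \<Longrightarrow> i < l \<Longrightarrow> P (v(i := c *s a)) = c *s P (v(i := a))"
  unfolding symmetric_multilinear_def by blast

lemma symmetric_multilinear_permute:
  "symmetric_multilinear l P \<Longrightarrow> p permutes {..<l} \<Longrightarrow> P (v \<circ> p) = P v"
  unfolding symmetric_multilinear_def by blast

lemma symmetric_multilinear_swap_0:
  assumes S: "symmetric_multilinear l P" and r: "r < l"
  shows "P ((\<lambda>_. x)(r := y)) = P (\<lambda>i. if i = 0 then y else x)"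
proof -
  have "Transposition.transpose 0 r permutes {..<l}"
    using r by (intro permutes_swap_id) auto
  moreover have "(\<lambda>_. x)(r := y) \<circ> Transposition.transpose 0 r = (\<lambda>i. if i = 0 then y else x)"
    by (auto simp: fun_eq_iff Transposition.transpose_def)
  ultimately show ?thesis
    using symmetric_multilinear_permute[OF S] by metis
qed

lemma symmetric_multilinear_scale_slots:
  assumes S: "symmetric_multilinear l P" and "k < l"
  shows "P (\<lambda>i. if i = 0 then y else if i \<le> k then t *s x else x)
       = t ^ k *s P (\<lambda>i. if i = 0 then y else x)"
  using \<open>k < l\<close>
proof (induction k)
  case 0
  then show ?case
    by (simp cong: if_cong)
next
  case (Suc k)
  define v where "v = (\<lambda>i::nat. if i = 0 then y else if i \<le> k then t *s x else x)"
  have "(\<lambda>i. if i = 0 then y else if i \<le> Suc k then t *s x else x) = v(Suc k := t *s x)"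
    by (auto simp: v_def le_Suc_eq)
  moreover have "v(Suc k := x) = v"
    by (auto simp: v_def)
  ultimately show ?case
    using symmetric_multilinear_scale[OF S Suc.prems, of v t x] Suc
    by (simp add: v_def)
qed

lemma linear_Ad:
  assumes "symmetric_multilinear l (Psi l)" and "l \<ge> 1"
  shows "Vector_Spaces.linear (*s) (*s) (Ad Psi l x)"
proof -
  have Ad_upd: "Ad Psi l x y = Psi l ((\<lambda>_. x)(0 := y))" for y
    unfolding Ad_def by (rule arg_cong[where f="Psi l"]) (auto simp: fun_eq_iff)
  show ?thesis
    unfolding Vector_Spaces.linear_iff
    using vec.vector_space_axioms
      symmetric_multilinear_add[OF assms(1), of 0] symmetric_multilinear_scale[OF assms(1), of 0]
      \<open>l \<ge> 1\<close>
    by (simp add: Ad_upd)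
qed

lemma Ad_scale_left:
  assumes S: "symmetric_multilinear l (Psi l)" and "l \<ge> 1"
  shows "Ad Psi l (t *s x) y = t ^ (l - 1) *s Ad Psi l x y"
proof -
  have "Ad Psi l (t *s x) y = Psi l (\<lambda>i. if i = 0 then y else if i \<le> l - 1 then t *s x else x)"
    unfolding Ad_def by (rule symmetric_multilinear_cong[OF S]) auto
  also have "\<dots> = t ^ (l - 1) *s Ad Psi l x y"
    unfolding Ad_def using \<open>l \<ge> 1\<close> by (intro symmetric_multilinear_scale_slots[OF S]) auto
  finally show ?thesis .
qed

lemma symmetric_multilinear_first_order_poly:
  assumes S: "symmetric_multilinear l P" and "k \<le> l"
  shows "\<exists>p. (\<forall>t. poly p t = P (\<lambda>i. if i < k then a i + t *s b i else a i) $ c)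
           \<and> coeff p 1 = (\<Sum>i<k. P (a(i := b i))) $ c"
  using \<open>k \<le> l\<close>
proof (induction k arbitrary: a)
  case 0
  show ?case
    by (rule exI[of _ "[:P a $ c:]"]) (simp add: fun_eq_iff)
next
  case (Suc k)
  define w where "w a t = (\<lambda>i. if i < k then a i + t *s b i else a i)" for a t
  obtain p where p: "\<forall>t. poly p t = P (w a t) $ c" "coeff p 1 = (\<Sum>i<k. P (a(i := b i))) $ c"
    using Suc.IH[of a] Suc_leD[OF Suc.prems] unfolding w_def by blast
  obtain q where q: "\<forall>t. poly q t = P (w (a(k := b k)) t) $ c"
    using Suc.IH[of "a(k := b k)"] Suc_leD[OF Suc.prems] unfolding w_def by blast
  have "w a' 0 = a'" for a'
    by (simp add: w_def fun_eq_iff)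
  then have q0: "coeff q 0 = P (a(k := b k)) $ c"
    using q by (simp flip: poly_0_coeff_0)
  have "P (\<lambda>i. if i < Suc k then a i + t *s b i else a i) = P (w a t) + t *s P (w (a(k := b k)) t)"
    for t
  proof -
    have "k < l" using Suc by simp
    have "(w a t)(k := a k) = w a t" and "(w a t)(k := b k) = w (a(k := b k)) t"
      by (auto simp: w_def)
    moreover have "P (\<lambda>i. if i < Suc k then a i + t *s b i else a i) = P ((w a t)(k := a k + t *s b k))"
      by (rule arg_cong[where f=P]) (auto simp: w_def)
    ultimately show ?thesis
      using symmetric_multilinear_add[OF S \<open>k < l\<close>] symmetric_multilinear_scale[OF S \<open>k < l\<close>]
      by simp
  qed
  with p q q0 show ?case
    by (intro exI[of _ "p + pCons 0 q"]) (simp add: coeff_pCons fun_upd_def)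
qed

lemma symmetric_multilinear_diagonal_poly:
  assumes S: "symmetric_multilinear l P"
  shows "\<exists>p. (\<forall>t. poly p t = P (\<lambda>_. x + t *s e) $ c)
           \<and> coeff p 1 = of_nat l * P (\<lambda>i. if i = 0 then e else x) $ c"
proof -
  obtain p where p: "\<forall>t. poly p t = P (\<lambda>i. if i < l then x + t *s e else x) $ c"
      "coeff p 1 = (\<Sum>r<l. P ((\<lambda>_. x)(r := e))) $ c"
    using symmetric_multilinear_first_order_poly[OF S order.refl, of "\<lambda>_. x" "\<lambda>_. e"] by auto
  have "P (\<lambda>i. if i < l then x + t *s e else x) = P (\<lambda>_. x + t *s e)" for t
    by (rule symmetric_multilinear_cong[OF S]) auto
  moreover have "(\<Sum>r<l. P ((\<lambda>_. x)(r := e))) $ c = of_nat l * P (\<lambda>i. if i = 0 then e else x) $ c"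
    by (simp add: symmetric_multilinear_swap_0[OF S] of_nat_index)
  ultimately show ?thesis
    using p by auto
qed

section \<open>Polynomial matrices and their formal inverses\<close>

definition coeff_mat :: "'a::zero poly ^'n^'m \<Rightarrow> nat \<Rightarrow> 'a^'n^'m" where
  "coeff_mat M k = (\<chi> i j. coeff (M $ i $ j) k)"

definition poly_mat :: "'a::comm_semiring_0 poly ^'n^'m \<Rightarrow> 'a \<Rightarrow> 'a^'n^'m" where
  "poly_mat M t = (\<chi> i j. poly (M $ i $ j) t)"

lemma coeff_mat_mat_1 [simp]:
  "coeff_mat (mat 1 :: 'a::comm_semiring_1 poly ^'n^'n) k = (if k = 0 then mat 1 else 0)"
  by (simp add: coeff_mat_def mat_def vec_eq_iff)

lemma poly_mat_mat_1 [simp]: "poly_mat (mat 1 :: 'a::comm_semiring_1 poly ^'n^'n) t = mat 1"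
  by (simp add: poly_mat_def mat_def vec_eq_iff)

lemma poly_mat_0: "poly_mat M 0 = coeff_mat M 0"
  by (simp add: poly_mat_def coeff_mat_def poly_0_coeff_0)

lemma poly_matrix_eqI:
  "(\<And>k. coeff_mat M k = coeff_mat N k) \<Longrightarrow> M = N"
  by (simp add: coeff_mat_def vec_eq_iff poly_eq_iff)

lemma poly_matrix_eqI_poly_mat:
  fixes M N :: "'a::{comm_ring_1,ring_no_zero_divisors,ring_char_0} poly ^'n^'m"
  assumes "\<And>t. poly_mat M t = poly_mat N t"
  shows "M = N"
proof -
  have "poly (M $ i $ j) = poly (N $ i $ j)" for i j
    using assms by (simp add: poly_mat_def vec_eq_iff fun_eq_iff)
  then show ?thesis
    by (simp add: vec_eq_iff poly_eq_poly_eq_iff)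
qed

lemma coeff_mat_mult:
  "coeff_mat (A ** B) k = (\<Sum>a\<le>k. coeff_mat A a ** coeff_mat B (k - a))"
  by (simp add: coeff_mat_def matrix_matrix_mult_def vec_eq_iff coeff_sum coeff_mult sum_component
      sum.swap[where A=UNIV])

lemma poly_mat_mult: "poly_mat (A ** B) t = poly_mat A t ** poly_mat B t"
  by (simp add: poly_mat_def matrix_matrix_mult_def vec_eq_iff poly_sum)

lemma det_poly_mat: "det (poly_mat M t) = poly (det M) t"
  by (simp add: det_def poly_mat_def poly_sum poly_prod)

lemma degree_det_le:
  fixes M :: "'a::comm_ring_1 poly ^'n^'n"
  assumes "\<And>i j. degree (M $ i $ j) \<le> d"
  shows "degree (det M) \<le> CARD('n) * d"
  unfolding det_def
proof (rule degree_sum_le)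
  fix p
  have "degree (\<Prod>i\<in>UNIV. M $ i $ p i) \<le> (\<Sum>i\<in>UNIV. degree (M $ i $ p i))"
    using degree_prod_sum_le[of UNIV "\<lambda>i. M $ i $ p i"] by (simp add: o_def)
  also have "\<dots> \<le> CARD('n) * d"
    using sum_mono[of UNIV "\<lambda>i. degree (M $ i $ p i)" "\<lambda>_. d"] assms by simp
  finally show "degree (of_int (sign p) * (\<Prod>i\<in>UNIV. M $ i $ p i)) \<le> CARD('n) * d"
    using degree_mult_le[of "of_int (sign p)" "\<Prod>i\<in>UNIV. M $ i $ p i"] by simp
qed simp

lemma matrix_mul_sum_right: "X ** sum M A = (\<Sum>a\<in>A. X ** M a)"
  by (induction A rule: infinite_finite_induct) (simp_all add: matrix_add_ldistrib)

lemma sum_matrix_vector_mult: "sum M A *v y = (\<Sum>a\<in>A. M a *v y)"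
  by (induction A rule: infinite_finite_induct) (simp_all add: matrix_vector_mult_add_rdistrib)

text \<open>The coefficients of the formal power series inverse of \<open>E - \<Sum>\<^sub>a\<^sub>\<ge>\<^sub>1 t\<^sup>a B a\<close>.\<close>

function neumann_coeffs :: "(nat \<Rightarrow> 'a::semiring_1 ^'n^'n) \<Rightarrow> nat \<Rightarrow> 'a^'n^'n" where
  "neumann_coeffs B s =
     (if s = 0 then mat 1 else (\<Sum>a\<in>{1..s}. B a ** neumann_coeffs B (s - a)))"
  by auto
termination
  by (relation "Wellfounded.measure snd") auto

declare neumann_coeffs.simps [simp del]

lemma neumann_coeffs_0 [simp]: "neumann_coeffs B 0 = mat 1"
  by (simp add: neumann_coeffs.simps)

lemma neumann_coeffs_pos:
  "s \<ge> 1 \<Longrightarrow> neumann_coeffs B s = (\<Sum>a\<in>{1..s}. B a ** neumann_coeffs B (s - a))"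
  by (simp add: neumann_coeffs.simps)

lemma coeff_mat_mult_one_minus:
  fixes A P :: "'a::comm_ring_1 poly ^'n^'n"
  assumes A: "\<And>k. coeff_mat A k = (if k = 0 then mat 1 else - B k)"
  shows "coeff_mat (A ** P) k = coeff_mat P k - (\<Sum>a\<in>{1..k}. B a ** coeff_mat P (k - a))"
proof -
  have "{..k} = insert 0 {1..k}"
    by auto
  moreover have "(- X) ** Y = - (X ** Y)" for X Y :: "'a^'n^'n"
    by (simp add: matrix_matrix_mult_def vec_eq_iff sum_negf)
  ultimately show ?thesis
    by (simp add: coeff_mat_mult A sum_negf)
qed

lemma right_inverse_iff_neumann_coeffs:
  fixes A P :: "'a::comm_ring_1 poly ^'n^'n"
  assumes A: "\<And>k. coeff_mat A k = (if k = 0 then mat 1 else - B k)"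
  shows "A ** P = mat 1 \<longleftrightarrow> (\<forall>k. coeff_mat P k = neumann_coeffs B k)"
proof
  assume inv: "A ** P = mat 1"
  show "\<forall>k. coeff_mat P k = neumann_coeffs B k"
  proof
    fix k
    show "coeff_mat P k = neumann_coeffs B k"
    proof (induction k rule: less_induct)
      case (less k)
      have "coeff_mat P k = (if k = 0 then mat 1 else 0) + (\<Sum>a\<in>{1..k}. B a ** coeff_mat P (k - a))"
        using coeff_mat_mult_one_minus[OF A, of P k] by (simp add: inv)
      also have "\<dots> = neumann_coeffs B k"
        using less by (auto simp: neumann_coeffs.simps intro!: sum.cong)
      finally show ?case .
    qed
  qed
next
  assume "\<forall>k. coeff_mat P k = neumann_coeffs B k"
  then show "A ** P = mat 1"
    by (intro poly_matrix_eqI)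
      (simp add: coeff_mat_mult_one_minus[OF A] neumann_coeffs.simps[of B])
qed

lemma det_eq_1_if_neumann_coeffs_vanish:
  fixes A :: "'a::field poly ^'n^'n"
  assumes A: "\<And>k. coeff_mat A k = (if k = 0 then mat 1 else - B k)"
    and vanish: "\<And>s. s \<ge> S \<Longrightarrow> neumann_coeffs B s = 0"
  shows "det A = 1"
proof -
  define P where "P = (\<chi> i j. \<Sum>k<S. monom (neumann_coeffs B k $ i $ j) k)"
  have "coeff_mat P k = neumann_coeffs B k" for k
    using vanish[of k] by (auto simp: P_def coeff_mat_def coeff_sum vec_eq_iff)
  then have "A ** P = mat 1"
    using right_inverse_iff_neumann_coeffs[OF A] by blast
  then have "det A * det P = 1"
    by (metis det_mul det_I)
  then obtain c where c: "det A = [:c:]"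
    by (metis dvdI is_unit_poly_iff)
  have "poly (det A) 0 = 1"
    using A[of 0] by (simp flip: det_poly_mat add: poly_mat_0)
  with c show ?thesis
    by simp
qed

definition adjugate :: "'a::comm_ring_1 ^'n^'n \<Rightarrow> 'a^'n^'n" where
  "adjugate A = (\<chi> k c. det (\<chi> i j. if j = k then axis c 1 $ i else A $ i $ j))"

lemma matrix_mul_adjugate:
  fixes A :: "'a::field ^'n^'n"
  assumes "det A \<noteq> 0"
  shows "A ** adjugate A = mat (det A)"
proof -
  have "(A ** adjugate A) $ i $ c = mat (det A) $ i $ c" for i c
  proof -
    define x where "x = (\<chi> k. adjugate A $ k $ c / det A)"
    have "A *v x = axis c 1"
      using cramer[OF assms, of x "axis c 1"]
      by (simp add: x_def adjugate_def)
    then have "(A *v x) $ i * det A = mat (det A) $ i $ c"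
      by (simp add: axis_def mat_def)
    then show ?thesis
      using assms
      by (simp add: matrix_matrix_mult_def matrix_vector_mult_def x_def sum_distrib_right)
  qed
  then show ?thesis
    by (simp add: vec_eq_iff)
qed

lemma poly_mat_adjugate: "poly_mat (adjugate M) t = adjugate (poly_mat M t)"
  unfolding adjugate_def
  by (simp add: poly_mat_def vec_eq_iff axis_def if_distrib[where f="\<lambda>p. poly p t"] cong: if_cong
      flip: det_poly_mat)

lemma degree_adjugate_le:
  fixes M :: "'a::comm_ring_1 poly ^'n^'n"
  assumes "\<And>i j. degree (M $ i $ j) \<le> d"
  shows "degree (adjugate M $ k $ c) \<le> CARD('n) * d"
  unfolding adjugate_def using assms by (simp add: degree_det_le axis_def)

lemma neumann_coeffs_vanish_if_det_eq_1:
  fixes A :: "'a::field_char_0 poly ^'n^'n"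
  assumes A: "\<And>k. coeff_mat A k = (if k = 0 then mat 1 else - B k)"
    and deg: "\<And>i j. degree (A $ i $ j) \<le> d"
    and det: "\<And>t. det (poly_mat A t) = 1"
    and "s > CARD('n) * d"
  shows "neumann_coeffs B s = 0"
proof -
  have "poly_mat (A ** adjugate A) t = poly_mat (mat 1) t" for t
    using matrix_mul_adjugate[of "poly_mat A t"] det
    by (simp add: poly_mat_mult poly_mat_adjugate)
  then have "A ** adjugate A = mat 1"
    by (rule poly_matrix_eqI_poly_mat)
  then have "neumann_coeffs B s = coeff_mat (adjugate A) s"
    using right_inverse_iff_neumann_coeffs[OF A] by simp
  also have "\<dots> = 0"
    using degree_adjugate_le[OF deg] \<open>s > CARD('n) * d\<close>
    by (simp add: coeff_mat_def vec_eq_iff) (meson coeff_eq_0 le_less_trans)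
  finally show ?thesis .
qed

section \<open>Engel operators as Neumann coefficients\<close>

definition compositions :: "nat set \<Rightarrow> nat \<Rightarrow> nat list set" where
  "compositions K s = {ls. set ls \<subseteq> K \<and> sum_list ls = s}"

lemma finite_compositions:
  assumes "0 \<notin> K"
  shows "finite (compositions K s)"
proof (rule finite_subset)
  have "length ls \<le> sum_list ls" if "set ls \<subseteq> K" for ls
  proof -
    have "\<forall>a\<in>set ls. 1 \<le> a"
      using that assms by (metis Suc_leI gr0I One_nat_def subsetD)
    then show ?thesis
      by (induction ls) auto
  qed
  moreover have "a \<le> sum_list ls" if "a \<in> set ls" for a :: nat and ls
    using that by (induction ls) auto
  ultimately show "compositions K s \<subseteq> {ls. set ls \<subseteq> {..s} \<and> length ls \<le> s}"
    by (fastforce simp: compositions_def)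
  show "finite {ls. set ls \<subseteq> {..s} \<and> length ls \<le> s}"
    by (rule finite_lists_length_le) simp
qed

lemma compositions_0: "0 \<notin> K \<Longrightarrow> compositions K 0 = {[]}"
  by (auto simp: compositions_def) (metis all_not_in_conv set_empty subset_eq)

lemma compositions_pos:
  assumes "s \<ge> 1"
  shows "compositions K s = (\<Union>a\<in>{a\<in>K. a \<le> s}. (#) a ` compositions K (s - a))"
proof (intro equalityI subsetI)
  fix ls
  assume "ls \<in> compositions K s"
  with assms obtain a r where "ls = a # r" "a \<in> K" "set r \<subseteq> K" "a + sum_list r = s"
    by (cases ls) (auto simp: compositions_def)
  then show "ls \<in> (\<Union>a\<in>{a\<in>K. a \<le> s}. (#) a ` compositions K (s - a))"
    by (auto simp: compositions_def)
qed (auto simp: compositions_def)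

lemma neumann_coeffs_eq_sum_compositions:
  assumes "0 \<notin> K" and B: "\<And>a. a \<ge> 1 \<Longrightarrow> a \<notin> K \<Longrightarrow> B a = 0"
  shows "neumann_coeffs B s = (\<Sum>ls\<in>compositions K s. foldr (\<lambda>a M. B a ** M) ls (mat 1))"
proof (induction s rule: less_induct)
  case (less s)
  define F where "F ls = foldr (\<lambda>a M. B a ** M) ls (mat 1)" for ls
  show ?case
  proof (cases "s = 0")
    case True
    then show ?thesis
      by (simp add: compositions_0[OF \<open>0 \<notin> K\<close>])
  next
    case False
    then have "s \<ge> 1"
      by simp
    have "neumann_coeffs B s = (\<Sum>a\<in>{a\<in>K. a \<le> s}. B a ** neumann_coeffs B (s - a))"
      unfolding neumann_coeffs_pos[OF \<open>s \<ge> 1\<close>]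
    proof (rule sum.mono_neutral_right)
      show "{a \<in> K. a \<le> s} \<subseteq> {1..s}"
        using \<open>0 \<notin> K\<close> by (auto simp: Suc_le_eq intro: gr0I)
    qed (use B in force)+
    also have "\<dots> = (\<Sum>a\<in>{a\<in>K. a \<le> s}. \<Sum>ls\<in>compositions K (s - a). F (a # ls))"
    proof (rule sum.cong[OF refl])
      fix a
      assume "a \<in> {a\<in>K. a \<le> s}"
      then have "s - a < s"
        using \<open>0 \<notin> K\<close> \<open>s \<ge> 1\<close> by (cases a) auto
      then show "B a ** neumann_coeffs B (s - a) = (\<Sum>ls\<in>compositions K (s - a). F (a # ls))"
        by (simp add: less F_def matrix_mul_sum_right)
    qed
    also have "\<dots> = (\<Sum>a\<in>{a\<in>K. a \<le> s}. sum F ((#) a ` compositions K (s - a)))"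
      by (simp add: sum.reindex)
    also have "\<dots> = sum F (compositions K s)"
      unfolding compositions_pos[OF \<open>s \<ge> 1\<close>]
      using \<open>0 \<notin> K\<close> by (intro sum.UNION_disjoint[symmetric]) (auto simp: finite_compositions)
    finally show ?thesis
      by (simp add: F_def)
  qed
qed

text \<open>\<open>Ad Psi (Suc a)\<close> is \<open>Ad\<^sub>a\<close> of the paper; with \<open>B\<^sub>a(x) = (a + 1) Ad\<^sub>a(x)\<close>
  the Jacobian matrix of \<open>F\<close> at \<open>t x\<close> is \<open>E - \<Sum>\<^sub>a t\<^sup>a B\<^sub>a(x)\<close>.\<close>

definition jacobian_coeff :: "nat \<Rightarrow> (nat \<Rightarrow> (nat \<Rightarrow> 'k::field ^'n) \<Rightarrow> 'k^'n) \<Rightarrow> 'k^'n \<Rightarrow> nat \<Rightarrow> 'k^'n^'n" where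
  "jacobian_coeff m Psi x a =
     (if a \<in> {1..m - 1} then matrix (\<lambda>y. of_nat (Suc a) *s Ad Psi (Suc a) x y) else 0)"

lemma jacobian_coeff_mult_vec:
  assumes "\<forall>l\<in>{2..m}. symmetric_multilinear l (Psi l)" and "a \<in> {1..m - 1}"
  shows "jacobian_coeff m Psi x a *v y = of_nat (Suc a) *s Ad Psi (Suc a) x y"
proof -
  have "Vector_Spaces.linear (*s) (*s) (\<lambda>y. of_nat (Suc a) *s Ad Psi (Suc a) x y)"
    using assms by (intro vec.linear_compose_scale_right linear_Ad) auto
  then show ?thesis
    using \<open>a \<in> {1..m - 1}\<close> by (simp add: jacobian_coeff_def matrix_works)
qed

lemma engel_seqs_eq_compositions:
  assumes "s \<ge> 1"
  shows "engel_seqs m s = map Suc ` compositions {1..m - 1} s"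
proof (intro equalityI subsetI)
  fix ls
  assume ls: "ls \<in> engel_seqs m s"
  have "ls = map Suc (map (\<lambda>l. l - 1) ls)"
    unfolding map_map by (rule map_idI[symmetric]) (use ls in \<open>auto simp: engel_seqs_def\<close>)
  moreover have "set (map (\<lambda>l. l - 1) ls) \<subseteq> {1..m - 1}"
    using ls by (force simp: engel_seqs_def)
  ultimately show "ls \<in> map Suc ` compositions {1..m - 1} s"
    using ls unfolding engel_seqs_def compositions_def by blast
next
  fix ls
  assume "ls \<in> map Suc ` compositions {1..m - 1} s"
  then obtain cs where ls: "ls = map Suc cs" and cs: "set cs \<subseteq> {1..m - 1}" "sum_list cs = s"
    by (auto simp: compositions_def)
  have "cs \<noteq> []"
    using cs assms by auto
  moreover have "set (map Suc cs) \<subseteq> {2..m}"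
    using cs by force
  moreover have "map (\<lambda>l. l - 1) (map Suc cs) = cs"
    by (simp add: map_idI)
  ultimately show "ls \<in> engel_seqs m s"
    using cs by (simp add: engel_seqs_def ls)
qed

lemma engel_term_eq_jacobian_coeff_product:
  assumes S: "\<forall>l\<in>{2..m}. symmetric_multilinear l (Psi l)"
    and "set cs \<subseteq> {1..m - 1}"
  shows "of_nat (prod_list (map Suc cs)) *s foldr (\<lambda>l f. Ad Psi l x \<circ> f) (map Suc cs) id y
       = foldr (\<lambda>a M. jacobian_coeff m Psi x a ** M) cs (mat 1) *v y"
  using \<open>set cs \<subseteq> {1..m - 1}\<close>
proof (induction cs)
  case Nil
  then show ?case
    by simp
next
  case (Cons a cs)
  then have "a \<in> {1..m - 1}" and "Suc a \<in> {2..m}"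
    by auto
  have scale: "Ad Psi (Suc a) x (c *s z) = c *s Ad Psi (Suc a) x z" for c z
    using vec.linear_scale[OF linear_Ad[where Psi=Psi, OF bspec[OF S \<open>Suc a \<in> {2..m}\<close>]]] by simp
  have "of_nat (prod_list (map Suc (a # cs))) *s foldr (\<lambda>l f. Ad Psi l x \<circ> f) (map Suc (a # cs)) id y
      = of_nat (Suc a) *s Ad Psi (Suc a) x
          (of_nat (prod_list (map Suc cs)) *s foldr (\<lambda>l f. Ad Psi l x \<circ> f) (map Suc cs) id y)"
    by (simp add: scale vector_smult_assoc del: of_nat_Suc mult_Suc)
  also have "\<dots> = of_nat (Suc a) *s Ad Psi (Suc a) x
      (foldr (\<lambda>a M. jacobian_coeff m Psi x a ** M) cs (mat 1) *v y)"
    using Cons.prems by (subst Cons.IH) simp_all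
  also have "\<dots> = jacobian_coeff m Psi x a *v (foldr (\<lambda>a M. jacobian_coeff m Psi x a ** M) cs (mat 1) *v y)"
    by (rule jacobian_coeff_mult_vec[OF S \<open>a \<in> {1..m - 1}\<close>, symmetric])
  also have "\<dots> = (jacobian_coeff m Psi x a ** foldr (\<lambda>a M. jacobian_coeff m Psi x a ** M) cs (mat 1)) *v y"
    by (rule matrix_vector_mul_assoc)
  finally show ?case
    by (simp only: foldr_Cons o_def)
qed

lemma engelE_eq_neumann_coeffs:
  assumes S: "\<forall>l\<in>{2..m}. symmetric_multilinear l (Psi l)" and "s \<ge> 1"
  shows "engelE m Psi s x y = neumann_coeffs (jacobian_coeff m Psi x) s *v y"
proof -
  have neumann: "neumann_coeffs (jacobian_coeff m Psi x) s
      = (\<Sum>cs\<in>compositions {1..m - 1} s. foldr (\<lambda>a M. jacobian_coeff m Psi x a ** M) cs (mat 1))"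
    by (rule neumann_coeffs_eq_sum_compositions) (auto simp: jacobian_coeff_def)
  have "engelE m Psi s x y = (\<Sum>cs\<in>compositions {1..m - 1} s.
      of_nat (prod_list (map Suc cs)) *s foldr (\<lambda>l f. Ad Psi l x \<circ> f) (map Suc cs) id y)"
    unfolding engelE_def engel_seqs_eq_compositions[OF \<open>s \<ge> 1\<close>]
    by (subst sum.reindex) (auto simp: inj_on_def)
  also have "\<dots> = (\<Sum>cs\<in>compositions {1..m - 1} s.
      foldr (\<lambda>a M. jacobian_coeff m Psi x a ** M) cs (mat 1) *v y)"
    by (rule sum.cong[OF refl], rule engel_term_eq_jacobian_coeff_product[OF S])
      (auto simp: compositions_def)
  finally show ?thesis
    by (simp add: neumann sum_matrix_vector_mult)
qed

lemma engel_type_iff_neumann_coeffs_vanish: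
  assumes S: "\<forall>l\<in>{2..m}. symmetric_multilinear l (Psi l)" and "s \<ge> 1"
  shows "engel_type m Psi s \<longleftrightarrow> (\<forall>x s'. s' \<ge> s \<longrightarrow> neumann_coeffs (jacobian_coeff m Psi x) s' = 0)"
proof -
  have "engelE m Psi s' x y = neumann_coeffs (jacobian_coeff m Psi x) s' *v y" if "s' \<ge> s" for s' x y
    using that \<open>s \<ge> 1\<close> by (intro engelE_eq_neumann_coeffs[OF S]) auto
  moreover have "M = 0 \<longleftrightarrow> (\<forall>y. M *v y = 0)" for M :: "'a^'b^'b"
    by (simp add: matrix_eq)
  ultimately show ?thesis
    unfolding engel_type_def by auto
qed

section \<open>The Jacobian along a ray\<close>

lemma jacobian_matrix_eqI:
  fixes G :: "'k::field_char_0 ^'n \<Rightarrow> 'k^'n"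
  assumes "\<And>t. poly p t = G (x + t *s axis j 1) $ i"
  shows "jacobian_matrix G x $ i $ j = coeff p 1"
proof -
  have "(THE p. \<forall>t. poly p t = G (x + t *s axis j 1) $ i) = p"
  proof (rule the1_equality)
    show "\<exists>!p. \<forall>t. poly p t = G (x + t *s axis j 1) $ i"
      using assms by (metis ext poly_eq_poly_eq_iff)
  qed (use assms in simp)
  then show ?thesis
    by (simp add: jacobian_matrix_def)
qed

lemma jacobian_matrix_polyF:
  fixes Psi :: "nat \<Rightarrow> (nat \<Rightarrow> 'k::field_char_0 ^'n) \<Rightarrow> 'k^'n"
  assumes S: "\<forall>l\<in>{2..m}. symmetric_multilinear l (Psi l)"
  shows "jacobian_matrix (polyF m Psi) x $ i $ j
       = axis j 1 $ i - (\<Sum>l\<in>{2..m}. of_nat l * Ad Psi l x (axis j 1) $ i)"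
proof -
  define e :: "'k^'n" where "e = axis j 1"
  have "\<forall>l\<in>{2..m}. \<exists>p. (\<forall>t. poly p t = Psi l (\<lambda>_. x + t *s e) $ i)
      \<and> coeff p 1 = of_nat l * Ad Psi l x e $ i"
    using S symmetric_multilinear_diagonal_poly unfolding Ad_def by blast
  then obtain p where p: "\<And>l. l \<in> {2..m} \<Longrightarrow> (\<forall>t. poly (p l) t = Psi l (\<lambda>_. x + t *s e) $ i)
      \<and> coeff (p l) 1 = of_nat l * Ad Psi l x e $ i"
    by metis
  have "jacobian_matrix (polyF m Psi) x $ i $ j = coeff ([:x $ i, e $ i:] - (\<Sum>l\<in>{2..m}. p l)) 1"
    using p by (intro jacobian_matrix_eqI) (simp add: e_def polyF_def poly_sum algebra_simps)
  also have "\<dots> = e $ i - (\<Sum>l\<in>{2..m}. of_nat l * Ad Psi l x e $ i)"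
    using p by (simp add: coeff_sum)
  finally show ?thesis
    by (simp add: e_def)
qed

definition jacobian_poly :: "nat \<Rightarrow> (nat \<Rightarrow> (nat \<Rightarrow> 'k::field ^'n) \<Rightarrow> 'k^'n) \<Rightarrow> 'k^'n \<Rightarrow> 'k poly^'n^'n" where
  "jacobian_poly m Psi x =
     (\<chi> i j. [:mat 1 $ i $ j:] - (\<Sum>a\<in>{1..m - 1}. monom (jacobian_coeff m Psi x a $ i $ j) a))"

lemma coeff_mat_jacobian_poly:
  "coeff_mat (jacobian_poly m Psi x) k = (if k = 0 then mat 1 else - jacobian_coeff m Psi x k)"
  by (auto simp: coeff_mat_def jacobian_poly_def coeff_sum jacobian_coeff_def vec_eq_iff coeff_pCons
      split: nat.split)

lemma degree_jacobian_poly: "degree (jacobian_poly m Psi x $ i $ j) \<le> m - 1"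
  unfolding jacobian_poly_def
  by (simp, intro degree_diff_le degree_sum_le) (auto intro: order.trans[OF degree_monom_le])

lemma poly_mat_jacobian_poly:
  fixes Psi :: "nat \<Rightarrow> (nat \<Rightarrow> 'k::field_char_0 ^'n) \<Rightarrow> 'k^'n"
  assumes S: "\<forall>l\<in>{2..m}. symmetric_multilinear l (Psi l)"
  shows "poly_mat (jacobian_poly m Psi x) t = jacobian_matrix (polyF m Psi) (t *s x)"
proof -
  have "(\<Sum>l\<in>{2..m}. of_nat l * Ad Psi l (t *s x) (axis j 1) $ i)
      = (\<Sum>a\<in>{1..m - 1}. jacobian_coeff m Psi x a $ i $ j * t ^ a)" for i j
  proof -
    have "{2..m} = {Suc 1..Suc (m - 1)}"
      by auto
    then have "(\<Sum>l\<in>{2..m}. of_nat l * Ad Psi l (t *s x) (axis j 1) $ i)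
        = (\<Sum>a\<in>{1..m - 1}. of_nat (Suc a) * Ad Psi (Suc a) (t *s x) (axis j 1) $ i)"
      by (simp only: sum.shift_bounds_cl_Suc_ivl)
    also have "\<dots> = (\<Sum>a\<in>{1..m - 1}. jacobian_coeff m Psi x a $ i $ j * t ^ a)"
    proof (rule sum.cong[OF refl])
      fix a
      assume "a \<in> {1..m - 1}"
      then have "Suc a \<in> {2..m}"
        by auto
      with \<open>a \<in> {1..m - 1}\<close> show "of_nat (Suc a) * Ad Psi (Suc a) (t *s x) (axis j 1) $ i
          = jacobian_coeff m Psi x a $ i $ j * t ^ a"
        by (simp add: Ad_scale_left[where Psi=Psi, OF bspec[OF S \<open>Suc a \<in> {2..m}\<close>]]
            matrix_def jacobian_coeff_def algebra_simps)
    qed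
    finally show ?thesis .
  qed
  moreover have "mat 1 $ i $ j = axis j 1 $ i" for i j :: 'n
    by (simp add: mat_def axis_def)
  ultimately have "poly_mat (jacobian_poly m Psi x) t $ i $ j
      = jacobian_matrix (polyF m Psi) (t *s x) $ i $ j" for i j
    unfolding jacobian_matrix_polyF[OF S]
    by (simp add: poly_mat_def jacobian_poly_def poly_sum poly_monom mult.commute)
  then show ?thesis
    by (simp add: vec_eq_iff)
qed

theorem mainTheorem2:
  fixes m :: nat and Psi :: "nat \<Rightarrow> (nat \<Rightarrow> 'k::field_char_0 ^'n) \<Rightarrow> 'k^'n"
  assumes "m \<ge> 2"
    and "\<And>l. l \<in> {2..m} \<Longrightarrow> symmetric_multilinear l (Psi l)"
  shows "(\<forall>x. det (jacobian_matrix (polyF m Psi) x) = 1) \<longleftrightarrow> (\<exists>s\<ge>1. engel_type m Psi s)"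
proof -
  have S: "\<forall>l\<in>{2..m}. symmetric_multilinear l (Psi l)"
    using assms(2) by blast
  note jacobian_poly = coeff_mat_jacobian_poly degree_jacobian_poly poly_mat_jacobian_poly[OF S]
  show ?thesis
  proof
    assume "\<forall>x. det (jacobian_matrix (polyF m Psi) x) = 1"
    then have "neumann_coeffs (jacobian_coeff m Psi x) s = 0" if "s \<ge> CARD('n) * (m - 1) + 1" for x s
      using that by (intro neumann_coeffs_vanish_if_det_eq_1[OF jacobian_poly(1,2)])
        (auto simp: jacobian_poly)
    then have "engel_type m Psi (CARD('n) * (m - 1) + 1)"
      by (simp add: engel_type_iff_neumann_coeffs_vanish[OF S])
    then show "\<exists>s\<ge>1. engel_type m Psi s"
      by auto
  next
    assume "\<exists>s\<ge>1. engel_type m Psi s"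
    then obtain s where "\<forall>x s'. s' \<ge> s \<longrightarrow> neumann_coeffs (jacobian_coeff m Psi x) s' = 0"
      using engel_type_iff_neumann_coeffs_vanish[OF S] by blast
    then have "det (jacobian_poly m Psi x) = 1" for x
      by (intro det_eq_1_if_neumann_coeffs_vanish[OF jacobian_poly(1)]) auto
    then show "\<forall>x. det (jacobian_matrix (polyF m Psi) x) = 1"
      using jacobian_poly(3)[of _ 1, symmetric] by (simp add: det_poly_mat)
  qed
qed

end
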